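(* For the generalized one-way trading problem (GOT) with capacity $C$ and bounds $0<L\le U$, $\theta=U/L$, under Assumption A, the optimal competitive ratio (the smallest competitive ratio achievable by an online algorithm) is $1+\ln\theta$.
   Context: GOT: a single knapsack of capacity $C$; items $n=1,\dots,N$ arrive one at a time. Item $n$ has a size $D_n>0$ and a value function $g_n:[0,D_n]\to\mathbb{R}_{\ge0}$, revealed on arrival. The offline problem is $\max\sum_n g_n(y_n)$ subject to $\sum_n y_n\le C$, $0\le y_n\le D_n$. Assumption A: each $g_n$ is non-decreasing, differentiable and concave, $g_n(0)=0$, and $L\le g_n'\le U$, with $L,U,C$ known in advance. An online algorithm irrevocably chooses $y_n$ upon arrival of item $n$ using only items $1,\dots,n$ and $C,L,U$, keeping the constraints feasible. Its competitive ratio is $\sup_{\mathcal I}\mathrm{OPT}(\mathcal I)/\mathrm{ALG}(\mathcal I)$ over all instances satisfying Assumption A. *)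

theory Defs
  imports "HOL-Analysis.Analysis"
begin

text \<open>An item is a pair (D, g): size D and value function g (only its restriction to
  [0, D] is relevant). An instance is a finite list of items, in arrival order.\<close>

type_synonym item = "real \<times> (real \<Rightarrow> real)"

definition valid_item :: "real \<Rightarrow> real \<Rightarrow> item \<Rightarrow> bool" where
  "valid_item L U it \<longleftrightarrow>
     (let D = fst it; g = snd it in
        D > 0 \<and> g 0 = 0 \<and> mono_on {0..D} g \<and> concave_on {0..D} g \<and>
        (\<exists>g'. \<forall>x\<in>{0..D}. (g has_real_derivative g' x) (at x within {0..D})
                          \<and> L \<le> g' x \<and> g' x \<le> U))"

definition valid_instance :: "real \<Rightarrow> real \<Rightarrow> item list \<Rightarrow> bool" where
  "valid_instance L U I \<longleftrightarrow> (\<forall>it\<in>set I. valid_item L U it)"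

definition feasible :: "real \<Rightarrow> item list \<Rightarrow> (nat \<Rightarrow> real) \<Rightarrow> bool" where
  "feasible C I y \<longleftrightarrow>
     (\<forall>n<length I. 0 \<le> y n \<and> y n \<le> fst (I ! n)) \<and> (\<Sum>n<length I. y n) \<le> C"

definition value_of :: "item list \<Rightarrow> (nat \<Rightarrow> real) \<Rightarrow> real" where
  "value_of I y = (\<Sum>n<length I. snd (I ! n) (y n))"

definition OPT :: "real \<Rightarrow> item list \<Rightarrow> real" where
  "OPT C I = Sup {value_of I y | y. feasible C I y}"

text \<open>A deterministic online algorithm (for fixed known C, L, U) maps the history of
  items 1..n (including the current item n) to the decision y_n.\<close>
type_synonym online_alg = "item list \<Rightarrow> real"

definition alg_decisions :: "online_alg \<Rightarrow> item list \<Rightarrow> nat \<Rightarrow> real" where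
  "alg_decisions A I n = A (take (Suc n) I)"

definition ALG :: "online_alg \<Rightarrow> item list \<Rightarrow> real" where
  "ALG A I = value_of I (alg_decisions A I)"

definition feasible_alg :: "real \<Rightarrow> real \<Rightarrow> real \<Rightarrow> online_alg \<Rightarrow> bool" where
  "feasible_alg C L U A \<longleftrightarrow>
     (\<forall>I. valid_instance L U I \<longrightarrow> feasible C I (alg_decisions A I))"

text \<open>A is c-competitive: OPT(I) \<le> c * ALG(I) on every instance satisfying Assumption A,
  i.e. sup_I OPT(I)/ALG(I) \<le> c (with OPT/0 = \<infinity> when OPT > 0).\<close>
definition competitive :: "real \<Rightarrow> real \<Rightarrow> real \<Rightarrow> online_alg \<Rightarrow> real \<Rightarrow> bool" where
  "competitive C L U A c \<longleftrightarrow>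
     (\<forall>I. valid_instance L U I \<longrightarrow> OPT C I \<le> c * ALG A I)"

end

theory Submission
  imports Defs "HOL-Real_Asymp.Real_Asymp"
begin

text \<open>
  Fix k = C / (1 + ln (U / L)) and the threshold \<phi>(w) = L for w \<le> k,
  \<phi>(w) = L exp (w / k - 1) for w \<ge> k, so that \<phi>(C) = U; let \<Psi> be its integral.
  Each item receives the amount maximising its value minus the increase of \<Psi> at the current
  utilisation. Then ALG \<ge> \<Psi>(W) for the final utilisation W, and the optimality of each
  choice makes \<phi> at the new utilisation a supergradient of the item's value there. If W < k,
  every item was accepted in full and OPT = ALG. Otherwise summing the supergradient
  inequalities against any feasible allocation gives OPT \<le> ALG - \<Psi>(W) + \<phi>(W) C, and
  \<phi>(W) C = (1 + ln (U / L)) \<Psi>(W) \<le> (1 + ln (U / L)) ALG.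

  Present linear items of size C with prices p i = L exp (i a / m), where
  a = ln (U / L) and i = 0, ..., m. Being c-competitive on every prefix forces
  p j C \<le> c (\<Sum>i \<le> j. p i x i), and summation by parts turns these inequalities into
  C (1 + (\<Sum>i < m. 1 - p i / p (i + 1))) \<le> c C, whose left side tends to (1 + a) C.
\<close>

section \<open>The pseudo-cost\<close>

definition marginal_cost :: "real \<Rightarrow> real \<Rightarrow> real \<Rightarrow> real" where
  "marginal_cost k L w = L * exp (max w k / k - 1)"

text \<open>total_cost k L w is the integral of marginal_cost k L over [0, w].\<close>
definition total_cost :: "real \<Rightarrow> real \<Rightarrow> real \<Rightarrow> real" where
  "total_cost k L w = L * k * exp (max w k / k - 1) - L * k + L * min w k"

lemma total_cost_below: "w \<le> k \<Longrightarrow> total_cost k L w = L * w"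
  by (simp add: total_cost_def max_def min_def)

lemma total_cost_above: "k \<le> w \<Longrightarrow> total_cost k L w = k * marginal_cost k L w"
  by (simp add: total_cost_def marginal_cost_def max_def min_def)

lemma marginal_cost_below: "0 < k \<Longrightarrow> w \<le> k \<Longrightarrow> marginal_cost k L w = L"
  by (simp add: marginal_cost_def max_def)

lemma marginal_cost_ge: "0 \<le> L \<Longrightarrow> 0 < k \<Longrightarrow> L \<le> marginal_cost k L w"
  unfolding marginal_cost_def by (simp add: mult_le_cancel_left1)

lemma marginal_cost_mono:
  "0 \<le> L \<Longrightarrow> 0 < k \<Longrightarrow> v \<le> w \<Longrightarrow> marginal_cost k L v \<le> marginal_cost k L w"
  unfolding marginal_cost_def by (auto intro!: mult_left_mono divide_right_mono)

lemma isCont_marginal_cost [continuous_intros]: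
  "k \<noteq> 0 \<Longrightarrow> isCont f x \<Longrightarrow> isCont (\<lambda>x. marginal_cost k L (f x)) x"
  unfolding marginal_cost_def by (intro continuous_intros)

lemma continuous_on_total_cost [continuous_intros]:
  "k \<noteq> 0 \<Longrightarrow> continuous_on S f \<Longrightarrow> continuous_on S (\<lambda>x. total_cost k L (f x))"
  unfolding total_cost_def by (intro continuous_intros) auto

lemma exp_above_tangent: "exp y + exp y * (x - y) \<le> exp (x :: real)"
proof -
  have "exp y * (1 + (x - y)) \<le> exp y * exp (x - y)"
    by simp
  then show ?thesis
    by (simp add: exp_diff algebra_simps)
qed

lemma total_cost_subgradient:
  assumes "0 < k" "0 \<le> L"
  shows "total_cost k L v + marginal_cost k L v * (w - v) \<le> total_cost k L w"
proof -
  define e where "e x = exp (max x k / k - 1)" for x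
  have "e v * ((max w k - max v k) / k) \<le> e w - e v"
    using exp_above_tangent[of "max v k / k - 1" "max w k / k - 1"]
    by (simp add: e_def diff_divide_distrib)
  then have "L * k * (e v * ((max w k - max v k) / k)) \<le> L * k * (e w - e v)"
    using assms by (intro mult_left_mono) auto
  then have "marginal_cost k L v * (max w k - max v k) \<le> L * k * (e w - e v)"
    using assms by (simp add: marginal_cost_def e_def)
  moreover have "marginal_cost k L v * (min w k - min v k) \<le> L * (min w k - min v k)"
  proof (cases "v \<le> k")
    case True
    then show ?thesis using assms by (simp add: marginal_cost_below)
  next
    case False
    then show ?thesis using assms marginal_cost_ge[of L k v]
      by (intro mult_right_mono_neg) auto
  qed
  moreover have "w - v = (max w k - max v k) + (min w k - min v k)"
    by linarith
  then have "marginal_cost k L v * (w - v)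
      = marginal_cost k L v * (max w k - max v k) + marginal_cost k L v * (min w k - min v k)"
    by (simp only: distrib_left)
  ultimately show ?thesis
    unfolding total_cost_def e_def[symmetric] right_diff_distrib by linarith
qed

section \<open>Items satisfying Assumption A\<close>

lemma valid_itemD:
  assumes "valid_item L U (D, g)"
  shows "0 < D" "g 0 = 0" "mono_on {0..D} g" "concave_on {0..D} g"
  using assms unfolding valid_item_def Let_def by auto

lemma valid_item_derivativeE:
  assumes "valid_item L U (D, g)"
  obtains g' where "\<And>x. x \<in> {0..D} \<Longrightarrow> (g has_real_derivative g' x) (at x within {0..D})"
    "\<And>x. x \<in> {0..D} \<Longrightarrow> L \<le> g' x \<and> g' x \<le> U"
  using assms unfolding valid_item_def Let_def by (auto intro: that)

lemma valid_item_continuous_on: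
  assumes "valid_item L U (D, g)"
  shows "continuous_on {0..D} g"
proof -
  obtain g' where der: "\<And>x. x \<in> {0..D} \<Longrightarrow> (g has_real_derivative g' x) (at x within {0..D})"
    and "\<And>x. x \<in> {0..D} \<Longrightarrow> L \<le> g' x \<and> g' x \<le> U"
    using valid_item_derivativeE[OF assms] by metis
  from der show ?thesis
    by (rule DERIV_continuous_on)
qed

lemma valid_item_slope_bounds:
  assumes "valid_item L U (D, g)" "0 \<le> a" "a \<le> b" "b \<le> D"
  shows "L * (b - a) \<le> g b - g a" "g b - g a \<le> U * (b - a)"
proof -
  obtain g' where der: "\<And>x. x \<in> {0..D} \<Longrightarrow> (g has_real_derivative g' x) (at x within {0..D})"
    and bnd: "\<And>x. x \<in> {0..D} \<Longrightarrow> L \<le> g' x \<and> g' x \<le> U"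
    using valid_item_derivativeE[OF assms(1)] by metis
  have "(g has_derivative (*) (g' x)) (at x within {a..b})" if "a \<le> x" "x \<le> b" for x
    using der[of x] that assms(2-4)
    by (auto simp: has_field_derivative_def intro: has_derivative_subset)
  then obtain \<xi> where "\<xi> \<in> {a..b}" "g b - g a = g' \<xi> * (b - a)"
    using mvt_very_simple[OF assms(3), of g "\<lambda>x. (*) (g' x)"] by blast
  moreover have "L \<le> g' \<xi>" "g' \<xi> \<le> U"
    using bnd[of \<xi>] calculation(1) assms(2-4) by auto
  ultimately show "L * (b - a) \<le> g b - g a" "g b - g a \<le> U * (b - a)"
    using assms(3) by (auto intro: mult_right_mono)
qed

section \<open>The threshold algorithm\<close>

definition is_last_maximizer :: "(real \<Rightarrow> real) \<Rightarrow> real set \<Rightarrow> real \<Rightarrow> bool" where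
  "is_last_maximizer f S y \<longleftrightarrow>
     y \<in> S \<and> (\<forall>x\<in>S. f x \<le> f y) \<and> (\<forall>x\<in>S. f x = f y \<longrightarrow> x \<le> y)"

lemma continuous_attains_last_maximizer:
  assumes "compact S" "S \<noteq> {}" "continuous_on S f"
  shows "\<exists>y. is_last_maximizer f S y"
proof -
  obtain y0 where y0: "y0 \<in> S" "\<forall>x\<in>S. f x \<le> f y0"
    using continuous_attains_sup[OF assms] by blast
  define M where "M = {x \<in> S. f x = f y0}"
  have "closed M"
    unfolding M_def using assms(1,3) by (intro continuous_closed_preimage_constant compact_imp_closed)
  then have "compact M"
    using compact_Int_closed[OF assms(1)] by (metis M_def Int_absorb1 mem_Collect_eq subsetI)
  moreover have "M \<noteq> {}"
    using y0 by (auto simp: M_def)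
  ultimately obtain y where "y \<in> M" "\<forall>x\<in>M. x \<le> y"
    using compact_attains_sup by blast
  then show ?thesis
    using y0 unfolding is_last_maximizer_def M_def by auto
qed

lemma initial_segment_in_Icc:
  fixes b y z :: real
  assumes y: "y \<in> {0..b}" and "0 \<le> z" and "z \<le> y \<or> y < b"
  obtains t0 where "0 < t0" "\<And>t. 0 < t \<Longrightarrow> t < t0 \<Longrightarrow> y + t * (z - y) \<in> {0..b}"
proof
  define t0 where "t0 = (if z \<le> y then 1 else (b - y) / (z - y))"
  show "0 < t0"
    using assms by (auto simp: t0_def)
  show "y + t * (z - y) \<in> {0..b}" if "0 < t" "t < t0" for t
  proof (cases "z \<le> y")
    case True
    then have "0 \<le> t * (y - z)" "t * (y - z) \<le> y - z"
      using that by (simp_all add: t0_def mult_left_le_one_le)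
    then show ?thesis
      using y \<open>0 \<le> z\<close> by (simp add: right_diff_distrib)
  next
    case False
    then have "t * (z - y) < b - y"
      using that by (simp add: t0_def field_simps)
    moreover have "0 \<le> t * (z - y)"
      using False that by simp
    ultimately show ?thesis
      using y by (simp add: right_diff_distrib)
  qed
qed

text \<open>By concavity the chord slope from y to z is at most every difference quotient of g
  between y and a point of the segment, so letting that point tend to y gives the bound.\<close>
lemma concave_on_le_slope_limit:
  fixes g \<psi> :: "real \<Rightarrow> real"
  assumes conc: "concave_on S g" and "y \<in> S" "z \<in> S" and cont: "isCont \<psi> y" and "0 < t0"
    and slope: "\<And>t. 0 < t \<Longrightarrow> t < t0 \<Longrightarrow>
      g (y + t * (z - y)) - g y \<le> \<psi> (y + t * (z - y)) * (t * (z - y))"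
  shows "g z - g y \<le> \<psi> y * (z - y)"
proof (rule tendsto_lowerbound)
  have "((\<lambda>t. y + t * (z - y)) \<longlongrightarrow> y) (at_right 0)"
    by (auto intro!: tendsto_eq_intros)
  then show "((\<lambda>t. \<psi> (y + t * (z - y)) * (z - y)) \<longlongrightarrow> \<psi> y * (z - y)) (at_right 0)"
    by (intro tendsto_mult_right isCont_tendsto_compose[OF cont])
  have "\<forall>\<^sub>F t in at_right 0. t \<in> {0<..<min t0 1}"
    using \<open>0 < t0\<close> by (intro eventually_at_right_real) simp
  then show "\<forall>\<^sub>F t in at_right 0. g z - g y \<le> \<psi> (y + t * (z - y)) * (z - y)"
  proof (rule eventually_mono)
    fix t assume t: "t \<in> {0<..<min t0 1}"
    have "t * (g z - g y) \<le> g (y + t * (z - y)) - g y"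
      using concave_onD[OF conc, of t y z] t \<open>y \<in> S\<close> \<open>z \<in> S\<close> by (simp add: algebra_simps)
    also have "\<dots> \<le> t * (\<psi> (y + t * (z - y)) * (z - y))"
      using slope[of t] t by (simp add: algebra_simps)
    finally show "g z - g y \<le> \<psi> (y + t * (z - y)) * (z - y)"
      using t by simp
  qed
qed simp

text \<open>Of all maximisers of value minus pseudo-cost the largest one is taken: this makes
  the algorithm accept every item in full as long as the utilisation stays below k, where the
  pseudo-cost is linear with slope L, the least possible marginal value.\<close>
definition decision :: "real \<Rightarrow> real \<Rightarrow> real \<Rightarrow> real \<Rightarrow> item \<Rightarrow> real" where
  "decision k L C w it =
     (SOME y. is_last_maximizer (\<lambda>y. snd it y - total_cost k L (w + y)) {0..min (fst it) (C - w)} y)"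

context
  fixes k L U C w D :: real and g :: "real \<Rightarrow> real"
  assumes item: "valid_item L U (D, g)" and k_pos: "0 < k" and L_pos: "0 < L"
    and w: "0 \<le> w" "w \<le> C"
begin

lemma decision_last_maximizer:
  "is_last_maximizer (\<lambda>y. g y - total_cost k L (w + y)) {0..min D (C - w)} (decision k L C w (D, g))"
proof -
  have "continuous_on {0..min D (C - w)} g"
    by (rule continuous_on_subset[OF valid_item_continuous_on[OF item]]) auto
  then have "continuous_on {0..min D (C - w)} (\<lambda>y. g y - total_cost k L (w + y))"
    using k_pos by (intro continuous_intros) auto
  moreover have "0 \<le> min D (C - w)"
    using valid_itemD(1)[OF item] w by simp
  ultimately show ?thesis
    unfolding decision_def fst_conv snd_conv
    by (intro someI_ex[of "is_last_maximizer _ _"] continuous_attains_last_maximizer) auto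
qed

lemma decision_bounds:
  "0 \<le> decision k L C w (D, g)" "decision k L C w (D, g) \<le> D" "w + decision k L C w (D, g) \<le> C"
  using decision_last_maximizer by (auto simp: is_last_maximizer_def)

lemma decision_gain:
  "total_cost k L (w + decision k L C w (D, g)) - total_cost k L w \<le> g (decision k L C w (D, g))"
proof -
  have "0 \<in> {0..min D (C - w)}"
    using valid_itemD(1)[OF item] w by simp
  then show ?thesis
    using decision_last_maximizer valid_itemD(2)[OF item]
    unfolding is_last_maximizer_def by fastforce
qed

lemma decision_fills_item_below_threshold:
  assumes "k \<le> C" and below: "w + decision k L C w (D, g) < k"
  shows "decision k L C w (D, g) = D"
proof (rule ccontr)
  define y where "y = decision k L C w (D, g)"
  define v where "v = min D (k - w)"
  assume "decision k L C w (D, g) \<noteq> D"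
  then have "y < v"
    using decision_bounds below by (auto simp: y_def v_def)
  have v: "v \<in> {0..min D (C - w)}"
    using \<open>y < v\<close> decision_bounds(1) \<open>k \<le> C\<close> by (auto simp: y_def v_def)
  have "L * (v - y) \<le> g v - g y"
    using valid_item_slope_bounds(1)[OF item, of y v] decision_bounds(1) \<open>y < v\<close> v
    by (auto simp: y_def)
  moreover have "total_cost k L (w + v) = L * (w + v)" "total_cost k L (w + y) = L * (w + y)"
    using below \<open>y < v\<close> v_def by (auto simp: y_def total_cost_below)
  ultimately have "g y - total_cost k L (w + y) \<le> g v - total_cost k L (w + v)"
    by (simp add: algebra_simps)
  then have "v \<le> y"
    using decision_last_maximizer v unfolding is_last_maximizer_def y_def by fastforce
  with \<open>y < v\<close> show False
    by simp
qed

lemma decision_supergradient: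
  assumes cost_C: "marginal_cost k L C = U" and z: "0 \<le> z" "z \<le> D"
  shows "g z \<le> g (decision k L C w (D, g))
    + marginal_cost k L (w + decision k L C w (D, g)) * (z - decision k L C w (D, g))"
proof -
  define y where "y = decision k L C w (D, g)"
  define b where "b = min D (C - w)"
  have y: "y \<in> {0..b}"
    and max: "\<And>u. u \<in> {0..b} \<Longrightarrow> g u - total_cost k L (w + u) \<le> g y - total_cost k L (w + y)"
    using decision_last_maximizer unfolding is_last_maximizer_def y_def b_def by auto
  have slope_to_y: "g u - g y \<le> marginal_cost k L (w + u) * (u - y)" if "u \<in> {0..b}" for u
  proof -
    have "total_cost k L (w + u) + marginal_cost k L (w + u) * (y - u) \<le> total_cost k L (w + y)"
      using total_cost_subgradient[of k L "w + u" "w + y"] k_pos L_pos by simp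
    then show ?thesis
      using max[OF that] by (simp add: algebra_simps)
  qed
  show ?thesis
  proof (cases "z \<le> y \<or> y < b")
    case True
    obtain t0 where "0 < t0" and "\<And>t. 0 < t \<Longrightarrow> t < t0 \<Longrightarrow> y + t * (z - y) \<in> {0..b}"
      using initial_segment_in_Icc[OF y z(1) True] by blast
    then have "g (y + t * (z - y)) - g y \<le> marginal_cost k L (w + (y + t * (z - y))) * (t * (z - y))"
      if "0 < t" "t < t0" for t
      using slope_to_y that by fastforce
    moreover have "isCont (\<lambda>u. marginal_cost k L (w + u)) y"
      using k_pos by (intro continuous_intros) auto
    ultimately have "g z - g y \<le> marginal_cost k L (w + y) * (z - y)"
      using concave_on_le_slope_limit[OF valid_itemD(4)[OF item], of y z _ t0] y z \<open>0 < t0\<close>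
      unfolding b_def by auto
    then show ?thesis
      by (simp add: y_def)
  next
    case False
    then have "y = C - w" "y < z"
      using y z by (auto simp: b_def)
    then have "g z - g y \<le> U * (z - y)" "marginal_cost k L (w + y) = U"
      using valid_item_slope_bounds(2)[OF item, of y z] y z cost_C by auto
    then show ?thesis
      by (simp add: y_def algebra_simps)
  qed
qed

end

definition allocated :: "real \<Rightarrow> real \<Rightarrow> real \<Rightarrow> item list \<Rightarrow> real" where
  "allocated k L C I = foldl (\<lambda>w it. w + decision k L C w it) 0 I"

definition threshold_alg :: "real \<Rightarrow> real \<Rightarrow> real \<Rightarrow> online_alg" where
  "threshold_alg C L U I =
     (let k = C / (1 + ln (U / L)) in decision k L C (allocated k L C (butlast I)) (last I))"

locale threshold_run =
  fixes C L U :: real and I :: "item list"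
  assumes C_pos: "0 < C" and L_pos: "0 < L" and L_le_U: "L \<le> U"
    and valid: "valid_instance L U I"
begin

definition k :: real where
  "k = C / (1 + ln (U / L))"

definition w :: "nat \<Rightarrow> real" where
  "w n = allocated k L C (take n I)"

definition y :: "nat \<Rightarrow> real" where
  "y = alg_decisions (threshold_alg C L U) I"

abbreviation N :: nat where
  "N \<equiv> length I"

abbreviation D :: "nat \<Rightarrow> real" where
  "D n \<equiv> fst (I ! n)"

abbreviation g :: "nat \<Rightarrow> real \<Rightarrow> real" where
  "g n \<equiv> snd (I ! n)"

lemma ratio_ge_one: "1 \<le> 1 + ln (U / L)"
  using L_pos L_le_U by simp

lemma k_pos: "0 < k" and k_le_C: "k \<le> C" and ratio_mult_k: "(1 + ln (U / L)) * k = C"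
  using ratio_ge_one C_pos by (auto simp: k_def field_simps)

lemma marginal_cost_C: "marginal_cost k L C = U"
proof -
  have "C / k - 1 = ln (U / L)"
    using ratio_mult_k k_pos by (simp add: field_simps)
  then show ?thesis
    using k_le_C L_pos L_le_U by (simp add: marginal_cost_def max_def)
qed

lemma item_valid: "n < N \<Longrightarrow> valid_item L U (D n, g n)"
  using valid by (simp add: valid_instance_def)

lemma y_eq_decision: "n < N \<Longrightarrow> y n = decision k L C (w n) (D n, g n)"
  by (simp add: y_def w_def k_def alg_decisions_def threshold_alg_def Let_def take_Suc_conv_app_nth)

lemma w_Suc: "n < N \<Longrightarrow> w (Suc n) = w n + y n"
  by (simp add: y_eq_decision w_def allocated_def take_Suc_conv_app_nth)

lemma w_bounds: "n \<le> N \<Longrightarrow> 0 \<le> w n \<and> w n \<le> C"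
proof (induction n)
  case 0
  then show ?case
    using C_pos by (simp add: w_def allocated_def)
next
  case (Suc n)
  then show ?case
    using decision_bounds[OF item_valid k_pos L_pos, of n "w n" C]
    by (simp add: w_Suc y_eq_decision)
qed

lemma y_bounds: "n < N \<Longrightarrow> 0 \<le> y n \<and> y n \<le> D n"
  using decision_bounds[OF item_valid k_pos L_pos, of n "w n" C] w_bounds[of n]
  by (simp add: y_eq_decision)

lemma w_eq_sum: "n \<le> N \<Longrightarrow> w n = (\<Sum>j<n. y j)"
  by (induction n) (simp_all add: w_Suc, simp add: w_def allocated_def)

lemma w_le_final: "n \<le> N \<Longrightarrow> w n \<le> w N"
  using y_bounds by (auto simp: w_eq_sum intro!: sum_mono2)

lemma feasible_y: "feasible C I y"
  using y_bounds w_bounds[of N] by (simp add: feasible_def w_eq_sum)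

lemma ALG_eq_sum: "ALG (threshold_alg C L U) I = (\<Sum>n<N. g n (y n))"
  by (simp add: ALG_def value_of_def y_def)

lemma total_cost_final_eq_sum:
  "total_cost k L (w N) = (\<Sum>n<N. total_cost k L (w (Suc n)) - total_cost k L (w n))"
  using sum_lessThan_telescope[of "\<lambda>n. total_cost k L (w n)" N] k_pos
  by (simp add: w_eq_sum total_cost_below)

lemma total_cost_final_le_ALG: "total_cost k L (w N) \<le> ALG (threshold_alg C L U) I"
  unfolding total_cost_final_eq_sum ALG_eq_sum
  using decision_gain[OF item_valid k_pos L_pos] w_bounds
  by (intro sum_mono) (simp add: w_Suc y_eq_decision)

lemma ALG_nonneg: "0 \<le> ALG (threshold_alg C L U) I"
proof -
  have "total_cost k L 0 + marginal_cost k L 0 * w N \<le> total_cost k L (w N)"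
    using total_cost_subgradient[OF k_pos, of L 0 "w N"] L_pos by simp
  moreover have "0 \<le> marginal_cost k L 0 * w N"
    using marginal_cost_ge[OF _ k_pos, of L 0] L_pos w_bounds[of N] by (intro mult_nonneg_nonneg) auto
  ultimately show ?thesis
    using total_cost_final_le_ALG k_pos by (simp add: total_cost_below)
qed

lemma value_le_ALG_below_threshold:
  assumes below: "w N < k" and z: "feasible C I z"
  shows "value_of I z \<le> ALG (threshold_alg C L U) I"
  unfolding value_of_def ALG_eq_sum
proof (rule sum_mono)
  fix n assume "n \<in> {..<N}"
  then have n: "n < N" by simp
  have "w n + y n < k"
    using w_le_final[of "Suc n"] n below by (simp add: w_Suc)
  then have "y n = D n"
    using decision_fills_item_below_threshold[OF item_valid[OF n] k_pos L_pos _ _ k_le_C] w_bounds[of n] n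
    by (simp add: y_eq_decision)
  then show "g n (z n) \<le> g n (y n)"
    using mono_onD[OF valid_itemD(3)[OF item_valid[OF n]]] z n by (auto simp: feasible_def)
qed

lemma item_value_le_supergradient:
  assumes "n < N" "0 \<le> v" "v \<le> D n"
  shows "g n v \<le> g n (y n) - marginal_cost k L (w (Suc n)) * y n + marginal_cost k L (w N) * v"
proof -
  have "g n v \<le> g n (y n) + marginal_cost k L (w (Suc n)) * (v - y n)"
    using decision_supergradient[OF item_valid k_pos L_pos _ _ marginal_cost_C] w_bounds[of n] assms
    by (simp add: y_eq_decision w_Suc)
  moreover have "marginal_cost k L (w (Suc n)) * v \<le> marginal_cost k L (w N) * v"
    using marginal_cost_mono[OF _ k_pos] w_le_final[of "Suc n"] L_pos assms
    by (intro mult_right_mono) auto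
  ultimately show ?thesis
    by (simp add: algebra_simps)
qed

lemma total_cost_final_le_payments:
  "total_cost k L (w N) \<le> (\<Sum>n<N. marginal_cost k L (w (Suc n)) * y n)"
  unfolding total_cost_final_eq_sum
proof (rule sum_mono)
  fix n assume "n \<in> {..<N}"
  then show "total_cost k L (w (Suc n)) - total_cost k L (w n) \<le> marginal_cost k L (w (Suc n)) * y n"
    using total_cost_subgradient[OF k_pos, of L "w (Suc n)" "w n"] L_pos
    by (simp add: w_Suc algebra_simps)
qed

lemma value_le_ALG_above_threshold:
  assumes above: "k \<le> w N" and z: "feasible C I z"
  shows "value_of I z \<le> (1 + ln (U / L)) * ALG (threshold_alg C L U) I"
proof -
  let ?\<phi> = "\<lambda>n. marginal_cost k L (w n)"
  have "value_of I z \<le> (\<Sum>n<N. g n (y n) - ?\<phi> (Suc n) * y n + ?\<phi> N * z n)"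
    unfolding value_of_def
    using item_value_le_supergradient z by (intro sum_mono) (simp add: feasible_def)
  also have "\<dots> = ALG (threshold_alg C L U) I - (\<Sum>n<N. ?\<phi> (Suc n) * y n) + ?\<phi> N * (\<Sum>n<N. z n)"
    by (simp add: ALG_eq_sum sum.distrib sum_subtractf sum_distrib_left)
  also have "\<dots> \<le> ALG (threshold_alg C L U) I - total_cost k L (w N) + ?\<phi> N * C"
  proof -
    have "?\<phi> N * (\<Sum>n<N. z n) \<le> ?\<phi> N * C"
      using z marginal_cost_ge[OF _ k_pos, of L "w N"] L_pos
      by (intro mult_left_mono) (auto simp: feasible_def)
    then show ?thesis
      using total_cost_final_le_payments by linarith
  qed
  also have "?\<phi> N * C = (1 + ln (U / L)) * total_cost k L (w N)"
    using above ratio_mult_k by (simp add: total_cost_above)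
  also have "ALG (threshold_alg C L U) I - total_cost k L (w N) + (1 + ln (U / L)) * total_cost k L (w N)
      \<le> (1 + ln (U / L)) * ALG (threshold_alg C L U) I"
    using total_cost_final_le_ALG ratio_ge_one
    by (simp add: algebra_simps mult_left_mono)
  finally show ?thesis .
qed

lemma OPT_le_ALG: "OPT C I \<le> (1 + ln (U / L)) * ALG (threshold_alg C L U) I"
  unfolding OPT_def
proof (rule cSup_least)
  show "{value_of I z |z. feasible C I z} \<noteq> {}"
    using feasible_y by auto
  show "v \<le> (1 + ln (U / L)) * ALG (threshold_alg C L U) I" if "v \<in> {value_of I z |z. feasible C I z}" for v
  proof (cases "w N < k")
    case True
    then show ?thesis
      using that value_le_ALG_below_threshold ALG_nonneg ratio_ge_one
      by (auto intro: order_trans[OF _ mult_le_cancel_right1[THEN iffD2]])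
  next
    case False
    then show ?thesis
      using that value_le_ALG_above_threshold by auto
  qed
qed

end

section \<open>The lower bound\<close>

lemma alg_decisions_take: "i < n \<Longrightarrow> alg_decisions A (take n I) i = alg_decisions A I i"
  by (simp add: alg_decisions_def min_def)

lemma value_le_OPT:
  assumes "valid_instance L U I" "feasible C I y"
  shows "value_of I y \<le> OPT C I"
  unfolding OPT_def
proof (rule cSup_upper)
  show "value_of I y \<in> {value_of I y |y. feasible C I y}"
    using assms(2) by auto
  have "value_of I z \<le> (\<Sum>n<length I. snd (I ! n) (fst (I ! n)))" if "feasible C I z" for z
    unfolding value_of_def
  proof (rule sum_mono)
    fix n assume n: "n \<in> {..<length I}"
    then have "mono_on {0..fst (I ! n)} (snd (I ! n))"
      using assms(1) valid_itemD(3)[of L U "fst (I ! n)" "snd (I ! n)"] by (simp add: valid_instance_def)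
    then show "snd (I ! n) (z n) \<le> snd (I ! n) (fst (I ! n))"
      by (rule mono_onD) (use that n in \<open>auto simp: feasible_def\<close>)
  qed
  then show "bdd_above {value_of I y |y. feasible C I y}"
    by (intro bdd_aboveI) blast
qed

lemma linear_item_valid:
  assumes "0 < D" "0 \<le> L" "L \<le> q" "q \<le> U"
  shows "valid_item L U (D, \<lambda>v. q * v)"
  unfolding valid_item_def Let_def fst_conv snd_conv
proof (intro conjI exI[of _ "\<lambda>_. q"])
  show "mono_on {0..D} (\<lambda>v. q * v)"
    using assms by (intro mono_onI) (auto intro: mult_left_mono)
  show "concave_on {0..D} (\<lambda>v. q * v)"
    by (auto simp: concave_on_iff algebra_simps)
qed (use assms in \<open>auto intro!: derivative_eq_intros\<close>)

lemma sum_by_parts_prefix_sums: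
  fixes p x :: "nat \<Rightarrow> real"
  assumes "\<And>i. p i \<noteq> 0"
  shows "(\<Sum>j\<le>m. x j)
    = (\<Sum>i<m. (1 / p i - 1 / p (Suc i)) * (\<Sum>j\<le>i. p j * x j)) + (\<Sum>j\<le>m. p j * x j) / p m"
proof (induction m)
  case 0
  then show ?case
    using assms[of 0] by simp
next
  case (Suc m)
  have "(1 / p m - 1 / p (Suc m)) * (\<Sum>j\<le>m. p j * x j) + (\<Sum>j\<le>Suc m. p j * x j) / p (Suc m)
      = (\<Sum>j\<le>m. p j * x j) / p m + x (Suc m)"
    using assms[of m] assms[of "Suc m"] by (simp add: field_simps)
  with Suc.IH show ?case
    by simp
qed

lemma sum_ge_of_prefix_bounds:
  fixes p x :: "nat \<Rightarrow> real"
  assumes p_pos: "\<And>i. 0 < p i" and p_mono: "\<And>i. p i \<le> p (Suc i)"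
    and prefix: "\<And>j. j \<le> m \<Longrightarrow> p j * C \<le> c * (\<Sum>i\<le>j. p i * x i)"
  shows "(1 + (\<Sum>i<m. 1 - p i / p (Suc i))) * C \<le> c * (\<Sum>j\<le>m. x j)"
proof -
  define S where "S j = (\<Sum>i\<le>j. p i * x i)" for j
  have "(1 + (\<Sum>i<m. 1 - p i / p (Suc i))) * C
      = (\<Sum>i<m. (1 / p i - 1 / p (Suc i)) * (p i * C)) + p m * C / p m"
  proof -
    have summand: "(1 / p i - 1 / p (Suc i)) * (p i * C) = (1 - p i / p (Suc i)) * C" for i
      using p_pos[of i] p_pos[of "Suc i"] by (simp add: field_simps)
    show ?thesis
      unfolding summand sum_distrib_right[symmetric] using p_pos[of m] by (simp add: distrib_right)
  qed
  also have "\<dots> \<le> (\<Sum>i<m. (1 / p i - 1 / p (Suc i)) * (c * S i)) + c * S m / p m"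
  proof (intro add_mono sum_mono divide_right_mono mult_left_mono)
    fix i assume "i \<in> {..<m}"
    then show "p i * C \<le> c * S i"
      unfolding S_def by (intro prefix) simp
    show "0 \<le> 1 / p i - 1 / p (Suc i)"
      using p_pos[of i] p_mono[of i] by (simp add: frac_le)
  qed (use prefix[of m] p_pos[of m] in \<open>auto simp: S_def\<close>)
  also have "\<dots> = c * (\<Sum>j\<le>m. x j)"
    using sum_by_parts_prefix_sums[of p x m, folded S_def] p_pos
    by (simp add: sum_distrib_left distrib_left mult_ac less_imp_neq[symmetric])
  finally show ?thesis .
qed

lemma ratio_le_mult_one_minus_exp_neg:
  fixes a m :: real
  assumes "0 < m" "0 \<le> a"
  shows "a * m / (m + a) \<le> m * (1 - exp (- (a / m)))"
proof -
  have "(m + a) * exp (- (a / m)) \<le> m"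
    using exp_ge_add_one_self[of "a / m"] assms by (simp add: exp_minus field_simps)
  then have "m * ((m + a) * exp (- (a / m))) \<le> m * m"
    using assms by (intro mult_left_mono) auto
  then have "a * m \<le> (m * (1 - exp (- (a / m)))) * (m + a)"
    by (simp add: algebra_simps)
  then show ?thesis
    using assms by (simp add: pos_divide_le_eq)
qed

lemma eventually_ratio_gt:
  fixes a b :: real
  assumes "0 \<le> a" "b < a"
  obtains m :: nat where "0 < m" "b < a * m / (m + a)"
proof -
  have "(\<lambda>m. a * real m / (real m + a)) \<longlonglongrightarrow> a"
    using \<open>0 \<le> a\<close> by real_asymp
  then have "\<forall>\<^sub>F m in sequentially. b < a * real m / (real m + a)"
    using \<open>b < a\<close> by (rule order_tendstoD(1))
  then obtain M where M: "\<And>n. M \<le> n \<Longrightarrow> b < a * real n / (real n + a)"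
    unfolding eventually_sequentially by blast
  show ?thesis
    using that[of "Suc M"] M[of "Suc M"] by simp
qed

lemma linear_instance_valid:
  assumes "0 < C" "0 \<le> L" "\<And>i. i \<le> m \<Longrightarrow> L \<le> p i \<and> p i \<le> U"
  shows "valid_instance L U (map (\<lambda>i. (C, \<lambda>v. p i * v)) [0..<Suc m])"
  using assms by (auto simp: valid_instance_def intro!: linear_item_valid)

lemma competitive_linear_prefix_bound:
  assumes comp: "competitive C L U A c" and "0 < C" "0 \<le> L"
    and prices: "\<And>i. i \<le> m \<Longrightarrow> L \<le> p i \<and> p i \<le> U" and "j \<le> m"
  defines "I \<equiv> map (\<lambda>i. (C, \<lambda>v. p i * v)) [0..<Suc m]"
  shows "p j * C \<le> c * (\<Sum>i\<le>j. p i * alg_decisions A I i)"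
proof -
  define J where "J = take (Suc j) I"
  have J_eq: "J = map (\<lambda>i. (C, \<lambda>v. p i * v)) [0..<Suc j]"
    using \<open>j \<le> m\<close> by (simp add: J_def I_def take_map min_def del: upt_Suc)
  have "valid_instance L U J"
    unfolding J_eq using assms(2,3) prices \<open>j \<le> m\<close> by (intro linear_instance_valid) auto
  define z where "z i = (if i = j then C else 0)" for i
  have "feasible C J z"
    using \<open>0 < C\<close> by (auto simp: feasible_def J_eq z_def nth_append simp del: upt_Suc)
  have "p j * C = value_of J z"
    by (simp add: value_of_def J_eq z_def if_distrib lessThan_Suc_atMost cong: if_cong del: upt_Suc)
  also have "\<dots> \<le> OPT C J"
    using value_le_OPT[OF \<open>valid_instance L U J\<close> \<open>feasible C J z\<close>] .
  also have "\<dots> \<le> c * ALG A J"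
    using comp \<open>valid_instance L U J\<close> by (simp add: competitive_def)
  also have "ALG A J = (\<Sum>i\<le>j. p i * alg_decisions A I i)"
  proof -
    have "length J = Suc j"
      by (simp add: J_eq del: upt_Suc)
    moreover have "snd (J ! i) = (\<lambda>v. p i * v)" if "i \<le> j" for i
      using that by (simp add: J_eq nth_append del: upt_Suc)
    moreover have "alg_decisions A J i = alg_decisions A I i" if "i \<le> j" for i
      using that by (simp add: J_def alg_decisions_take)
    ultimately show ?thesis
      unfolding ALG_def value_of_def lessThan_Suc_atMost by (intro sum.cong) auto
  qed
  finally show ?thesis .
qed


lemma no_competitive_alg_below:
  assumes C_pos: "0 < C" and L_pos: "0 < L" and L_le_U: "L \<le> U"
    and c: "c < 1 + ln (U / L)" and feasible: "feasible_alg C L U A"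
  shows "\<not> competitive C L U A c"
proof
  assume comp: "competitive C L U A c"
  define a where "a = ln (U / L)"
  have "0 \<le> a" "c - 1 < a"
    using L_pos L_le_U c by (simp_all add: a_def)
  then obtain m :: nat where "0 < m" and m: "c - 1 < a * m / (m + a)"
    by (rule eventually_ratio_gt)
  define p where "p i = L * exp (a * i / m)" for i :: nat
  define I where "I = map (\<lambda>i. (C, \<lambda>v. p i * v)) [0..<Suc m]"
  define x where "x = alg_decisions A I"
  have p_pos: "0 < p i" and p_mono: "p i \<le> p (Suc i)" for i
    using L_pos \<open>0 \<le> a\<close> by (simp_all add: p_def divide_right_mono mult_left_mono)
  have prices: "L \<le> p i \<and> p i \<le> U" if "i \<le> m" for i
  proof -
    have "a * i / m \<le> a"
      using that \<open>0 < m\<close> \<open>0 \<le> a\<close> by (simp add: field_simps mult_left_mono)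
    then have "p i \<le> L * exp a"
      using L_pos by (simp add: p_def)
    then show ?thesis
      using L_pos L_le_U \<open>0 \<le> a\<close> by (simp add: p_def a_def)
  qed
  have "valid_instance L U I"
    unfolding I_def using L_pos prices by (intro linear_instance_valid[OF C_pos]) auto
  then have "feasible C I x"
    using feasible by (simp add: feasible_alg_def x_def)
  then have x_nonneg: "0 \<le> (\<Sum>j\<le>m. x j)" and x_le_C: "(\<Sum>j\<le>m. x j) \<le> C"
    by (auto simp: feasible_def I_def lessThan_Suc_atMost intro: sum_nonneg simp del: upt_Suc)
  define r where "r = (\<Sum>i<m. 1 - p i / p (Suc i))"
  have r_bound: "(1 + r) * C \<le> c * (\<Sum>j\<le>m. x j)"
    unfolding r_def using competitive_linear_prefix_bound[OF comp C_pos _ prices] L_pos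
    by (intro sum_ge_of_prefix_bounds p_pos p_mono) (auto simp: x_def I_def)
  have "p i / p (Suc i) = exp (- (a / m))" for i
    using L_pos \<open>0 < m\<close> by (simp add: p_def exp_diff[symmetric] field_simps)
  then have "a * m / (m + a) \<le> r"
    using ratio_le_mult_one_minus_exp_neg[of m a] \<open>0 < m\<close> \<open>0 \<le> a\<close> by (simp add: r_def)
  moreover have "0 \<le> a * m / (m + a)"
    using \<open>0 \<le> a\<close> by simp
  ultimately have "max c 0 < 1 + r"
    using m by linarith
  moreover have "c * (\<Sum>j\<le>m. x j) \<le> max c 0 * C"
    using x_nonneg x_le_C by (smt (verit) mult_left_mono mult_right_mono)
  ultimately show False
    using r_bound C_pos by (smt (verit) mult_strict_right_mono)
qed

lemma threshold_alg_feasible: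
  assumes "0 < C" "0 < L" "L \<le> U"
  shows "feasible_alg C L U (threshold_alg C L U)"
  unfolding feasible_alg_def
proof (intro allI impI)
  fix I assume "valid_instance L U I"
  then interpret threshold_run C L U I
    using assms by unfold_locales
  show "feasible C I (alg_decisions (threshold_alg C L U) I)"
    using feasible_y by (simp add: y_def)
qed

lemma threshold_alg_competitive:
  assumes "0 < C" "0 < L" "L \<le> U"
  shows "competitive C L U (threshold_alg C L U) (1 + ln (U / L))"
  unfolding competitive_def
proof (intro allI impI)
  fix I assume "valid_instance L U I"
  then interpret threshold_run C L U I
    using assms by unfold_locales
  show "OPT C I \<le> (1 + ln (U / L)) * ALG (threshold_alg C L U) I"
    by (rule OPT_le_ALG)
qed

theorem theorem2:
  fixes C L U :: real
  assumes "C > 0" and "0 < L" and "L \<le> U"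
  shows "(\<exists>A. feasible_alg C L U A \<and> competitive C L U A (1 + ln (U / L)))
       \<and> (\<forall>c < 1 + ln (U / L). \<not> (\<exists>A. feasible_alg C L U A \<and> competitive C L U A c))"
proof
  show "\<exists>A. feasible_alg C L U A \<and> competitive C L U A (1 + ln (U / L))"
    using threshold_alg_feasible[OF assms] threshold_alg_competitive[OF assms] by blast
  show "\<forall>c < 1 + ln (U / L). \<not> (\<exists>A. feasible_alg C L U A \<and> competitive C L U A c)"
    using no_competitive_alg_below[OF assms] by blast
qed

end
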